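(* Let $P,Q$ be probability measures on $(\Omega,\mathcal{M})$. For measurable $\rho:\Omega\to[0,\infty]$ and $\beta\ne0$ let $\mathcal{T}^+_\beta(\rho)=\{\tau:\Omega\to[0,\infty]\text{ measurable}: E_P[\tau^\beta]\le E_P[\rho^\beta]\}$ and $\mathcal{T}^-_\beta(\rho)=\{\tau:\Omega\to[0,\infty]\text{ measurable}: E_P[\tau^\beta]\ge E_P[\rho^\beta]\}$. (1) Suppose $Q\ll P$, $\nu>0$, and $\phi_\nu=(dQ/dP)^\nu$. Then $$\sup_{\tau\in\mathcal{T}^+_{1+\nu^{-1}}(\phi_\nu)}\log\int\tau dQ=\log\int\phi_\nu dQ=\inf_{c>1}\Big\{\frac1c\log\int\phi_\nu^cdP+\frac1{c-1}R_{c/(c-1)}(Q\|P)\Big\},$$ the infimum is achieved at $c=1+\nu^{-1}$, and $\log\int\phi_\nu dQ=\nu(1+\nu)R_{1+\nu}(Q\|P)$. (2) Suppose $P\ll Q$, $\nu>1$, $\rho_\nu=(dP/dQ)^\nu$, and $\int(dP/dQ)^{\nu-1}dP<\infty$. Then $$\inf_{\tau\in\mathcal{T}^-_{1-\nu^{-1}}(\rho_\nu)}\log\int\tau dQ=\log\int\rho_\nu dQ=\sup_{c<1,c\ne0}\Big\{\frac1c\log\int\rho_\nu^cdP-\frac1{1-c}R_{1/(1-c)}(P\|Q)\Big\},$$ the supremum is achieved at $c=1-\nu^{-1}$, and $\log\int\rho_\nu dQ=\nu(\nu-1)R_\nu(P\|Q)$. (3) Suppose $P\ll Q$, $\nu\in(0,1)$,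 $\rho_\nu=(dP/dQ)^\nu$. Then $$\inf_{\tau\in\mathcal{T}^+_{1-\nu^{-1}}(\rho_\nu)}\log\int\tau dQ=\log\int\rho_\nu dQ=\sup_{c<1,c\ne0}\Big\{\frac1c\log\int\rho_\nu^cdP-\frac1{1-c}R_{1/(1-c)}(P\|Q)\Big\},$$ the supremum is achieved at $c=1-\nu^{-1}$, and $\log\int\rho_\nu dQ=\nu(\nu-1)R_\nu(P\|Q)$.
   Context: Powers $\tau^c=\exp(c\log\tau)$ with continuous extensions of $\exp,\log$ to extended reals; conventions $-\infty+\infty=\infty$ in upper bounds and $\infty-\infty=-\infty$ in lower bounds. Rényi divergence: let $\nu'$ be a $\sigma$-finite positive measure with $dP=p\,d\nu'$, $dQ=q\,d\nu'$. For $\alpha\in(0,1)$, $R_\alpha(Q\|P)=\frac{1}{\alpha(\alpha-1)}\log\int_{p>0}q^\alpha p^{1-\alpha}\,d\nu'$; for $\alpha>1$, the same formula if $Q\ll P$ and $R_\alpha(Q\|P)=+\infty$ if $Q\not\ll P$; for $\alpha<0$, $R_\alpha(Q\|P)=R_{1-\alpha}(P\|Q)$. *)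

theory Defs
  imports "HOL-Probability.Probability"
begin

definition elog :: "ennreal \<Rightarrow> ereal" where
  "elog t = (if t = 0 then -\<infinity> else if t = \<infinity> then \<infinity> else ereal (ln (enn2real t)))"

text \<open>Power t^c = exp(c log t) with continuous extensions of exp and log.\<close>
definition epow :: "ennreal \<Rightarrow> real \<Rightarrow> ennreal" where
  "epow t c = (if c = 0 then 1
     else if t = 0 then (if c > 0 then 0 else \<infinity>)
     else if t = \<infinity> then (if c > 0 then \<infinity> else 0)
     else ennreal (enn2real t powr c))"

text \<open>Addition conventions: in upper bounds -\<infinity>+\<infinity>=\<infinity>; in lower bounds \<infinity>-\<infinity>=-\<infinity>.\<close>
definition uadd :: "ereal \<Rightarrow> ereal \<Rightarrow> ereal" where
  "uadd a b = (if a = \<infinity> \<or> b = \<infinity> then \<infinity> else a + b)"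

definition ladd :: "ereal \<Rightarrow> ereal \<Rightarrow> ereal" where
  "ladd a b = (if a = -\<infinity> \<or> b = -\<infinity> then -\<infinity> else a + b)"

definition Tplus :: "'a measure \<Rightarrow> real \<Rightarrow> ('a \<Rightarrow> ennreal) \<Rightarrow> ('a \<Rightarrow> ennreal) set" where
  "Tplus P \<beta> \<rho> = {\<tau> \<in> borel_measurable P.
     (\<integral>\<^sup>+x. epow (\<tau> x) \<beta> \<partial>P) \<le> (\<integral>\<^sup>+x. epow (\<rho> x) \<beta> \<partial>P)}"

definition Tminus :: "'a measure \<Rightarrow> real \<Rightarrow> ('a \<Rightarrow> ennreal) \<Rightarrow> ('a \<Rightarrow> ennreal) set" where
  "Tminus P \<beta> \<rho> = {\<tau> \<in> borel_measurable P.
     (\<integral>\<^sup>+x. epow (\<tau> x) \<beta> \<partial>P) \<ge> (\<integral>\<^sup>+x. epow (\<rho> x) \<beta> \<partial>P)}"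

definition renyi_ref :: "'a measure \<Rightarrow> 'a measure \<Rightarrow> 'a measure \<Rightarrow> ('a \<Rightarrow> ennreal) \<Rightarrow> ('a \<Rightarrow> ennreal) \<Rightarrow> bool" where
  "renyi_ref Q P N p q \<longleftrightarrow> sigma_finite_measure N \<and> p \<in> borel_measurable N \<and>
     q \<in> borel_measurable N \<and> P = density N p \<and> Q = density N q"

text \<open>The formula (1/(\<alpha>(\<alpha>-1))) log \<integral>_{p>0} q^\<alpha> p^(1-\<alpha>) dN, for a chosen reference (N,p,q)
  (the value does not depend on the choice).\<close>
definition renyi_core :: "real \<Rightarrow> 'a measure \<Rightarrow> 'a measure \<Rightarrow> ereal" where
  "renyi_core \<alpha> Q P =
    (let t = (SOME t. renyi_ref Q P (fst t) (fst (snd t)) (snd (snd t)));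
         N = fst t; p = fst (snd t); q = snd (snd t)
     in ereal (1 / (\<alpha> * (\<alpha> - 1))) *
        elog (\<integral>\<^sup>+x \<in> {x \<in> space N. p x > 0}. epow (q x) \<alpha> * epow (p x) (1 - \<alpha>) \<partial>N))"

text \<open>Renyi divergence R_\<alpha>(Q||P). Note: absolutely_continuous P Q means Q \<ll> P.
  Not defined (undefined) for \<alpha> \<in> {0,1}, which never occur in the theorem.\<close>
definition renyi :: "real \<Rightarrow> 'a measure \<Rightarrow> 'a measure \<Rightarrow> ereal" where
  "renyi \<alpha> Q P =
    (if 0 < \<alpha> \<and> \<alpha> < 1 then renyi_core \<alpha> Q P
     else if 1 < \<alpha> then (if absolutely_continuous P Q then renyi_core \<alpha> Q P else \<infinity>)
     else if \<alpha> < 0 then (if absolutely_continuous Q P then renyi_core (1 - \<alpha>) P Q else \<infinity>)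
     else undefined)"

end

theory Submission
  imports Defs
begin

text \<open>
  Everything follows from Hoelder's inequality for nonnegative integrals on [0, \<infinity>],
  \<integral> u^\<theta> v^(1-\<theta>) \<le> (\<integral> u)^\<theta> (\<integral> v)^(1-\<theta>).
  Let h be the density of N with respect to M and m(\<alpha>) = \<integral> h^\<alpha> dM, so that
  R_\<alpha>(N||M) = log m(\<alpha>) / (\<alpha>(\<alpha> - 1)) and every quantity in the theorem is a log-moment.
  The bounds over test functions are Hoelder applied to \<integral> \<tau> dN = \<integral> h \<tau> dM, the variational
  bounds are Hoelder applied to a factorisation of one power of h into two others, and the
  extremisers (the density power itself, and c = 1 \<plusminus> 1/\<nu>) turn Hoelder into equality.
  For negative exponents Hoelder is used in reverse: the quantity A to be bounded appears as a
  factor, and the resulting inequality A \<le> T^\<theta> A^(1-\<theta>) is solved for A.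
\<close>

section \<open>Extended powers and Hoelder's inequality\<close>

lemma measurable_epow [measurable]:
  "f \<in> borel_measurable M \<Longrightarrow> (\<lambda>x. epow (f x) c) \<in> borel_measurable M"
proof -
  have "(\<lambda>t::ennreal. ennreal (enn2real t powr c)) \<in> borel_measurable borel"
    by measurable
  then have "(\<lambda>t. epow t c) \<in> borel_measurable borel"
    unfolding epow_def by (intro measurable_If) auto
  then show "f \<in> borel_measurable M \<Longrightarrow> ?thesis"
    by (rule measurable_compose[rotated])
qed

lemma ennreal_pos_cases:
  fixes x :: ennreal
  obtains "x = 0" | "x = \<infinity>" | r where "r > 0" "x = ennreal r"
proof (cases x)
  case (real r)
  then show ?thesis using that by (cases "r > 0") (auto simp: ennreal_eq_0_iff)
qed (use that in auto)

lemma ennreal_finite_posE: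
  fixes x :: ennreal
  assumes "x \<noteq> 0" "x \<noteq> \<infinity>"
  obtains r where "r > 0" "x = ennreal r"
  using assms by (cases x rule: ennreal_pos_cases) auto

lemma epow_ennreal [simp]: "r > 0 \<Longrightarrow> epow (ennreal r) c = ennreal (r powr c)"
  by (simp add: epow_def)

lemma epow_zero: "epow 0 c = (if c = 0 then 1 else if c > 0 then 0 else \<infinity>)"
  by (simp add: epow_def)

lemma epow_top: "epow top c = (if c = 0 then 1 else if c > 0 then \<infinity> else 0)"
  by (simp add: epow_def)

lemma epow_one_right [simp]: "epow x 1 = x"
  by (cases x rule: ennreal_pos_cases) (auto simp: epow_def)

lemma epow_one [simp]: "epow 1 c = 1"
  by (simp add: epow_def)

lemma epow_epow: "epow (epow x a) b = epow x (a * b)"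
  by (cases x rule: ennreal_pos_cases) (auto simp: epow_def zero_less_mult_iff powr_powr)

lemma epow_add_pos: "a > 0 \<Longrightarrow> b > 0 \<Longrightarrow> epow x (a + b) = epow x a * epow x b"
  by (cases x rule: ennreal_pos_cases) (auto simp: epow_def powr_add ennreal_mult)

lemma epow_add: "x \<noteq> 0 \<Longrightarrow> x \<noteq> \<infinity> \<Longrightarrow> epow x (a + b) = epow x a * epow x b"
  by (cases x rule: ennreal_pos_cases) (auto simp: powr_add ennreal_mult)

lemma epow_mult_ennreal:
  assumes "r > 0"
  shows "epow (ennreal r * x) c = ennreal (r powr c) * epow x c"
proof (cases x rule: ennreal_pos_cases)
  case 2
  then show ?thesis
    using assms by (auto simp: epow_top ennreal_mult_top ennreal_mult_eq_top_iff)
next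
  case (3 s)
  then show ?thesis
    using assms by (simp add: ennreal_mult[symmetric] powr_mult)
qed (use assms in \<open>auto simp: epow_zero ennreal_mult_top\<close>)

lemma epow_mono: "c > 0 \<Longrightarrow> x \<le> y \<Longrightarrow> epow x c \<le> epow y c"
proof (cases x rule: ennreal_pos_cases)
  case (3 r)
  assume "c > 0" "x \<le> y"
  then show ?thesis using 3
    by (cases y rule: ennreal_pos_cases) (auto simp: epow_top powr_mono2 ennreal_leI)
qed (auto simp: epow_zero top_unique)

lemma epow_eq_0_iff: "c > 0 \<Longrightarrow> epow x c = 0 \<longleftrightarrow> x = 0"
  by (cases x rule: ennreal_pos_cases) (auto simp: epow_def)

lemma epow_mult_epow_one_minus:
  fixes p f :: ennreal
  assumes "\<alpha> > 0" "p \<noteq> 0" "p \<noteq> \<infinity>"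
  shows "epow (p * f) \<alpha> * epow p (1 - \<alpha>) = p * epow f \<alpha>"
proof -
  obtain r where r: "r > 0" "p = ennreal r"
    using assms ennreal_finite_posE by blast
  have "r powr \<alpha> * r powr (1 - \<alpha>) = r"
    using r by (simp add: powr_add[symmetric])
  then show ?thesis
    unfolding r(2) epow_mult_ennreal[OF r(1)] using r
    by (simp add: mult.commute mult.left_commute ennreal_mult'[symmetric] del: ennreal_mult')
qed

lemma epow_le_epow_mult_epow_neg:
  fixes g t :: ennreal
  assumes fin: "g \<noteq> \<infinity>" "t \<noteq> \<infinity>" "g * epow t \<beta> \<noteq> \<infinity>"
    and \<beta>: "\<beta> < 0" "\<beta> * \<nu> = \<nu> - 1" and \<nu>: "0 < \<nu>"
  shows "epow g \<nu> \<le> epow t (1 - \<nu>) * epow (g * epow t \<beta>) \<nu>"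
proof (cases "g = 0")
  case False
  then have "epow t \<beta> \<noteq> \<infinity>"
    using fin(3) by (auto simp: ennreal_mult_eq_top_iff)
  then have "t \<noteq> 0"
    using \<beta> by (auto simp: epow_zero)
  with fin False obtain r s where rs: "r > 0" "t = ennreal r" "s > 0" "g = ennreal s"
    by (metis ennreal_finite_posE)
  have "r powr (1 - \<nu>) * (s * r powr \<beta>) powr \<nu> = s powr \<nu>"
    using rs \<beta> by (simp add: powr_mult powr_powr powr_add[symmetric])
  then show ?thesis
    using rs by (simp add: ennreal_mult'[symmetric] del: ennreal_mult')
qed (use \<nu> in \<open>simp add: epow_zero\<close>)

lemma epow_young:
  fixes x y :: ennreal
  assumes "0 < \<theta>" "\<theta> < 1"
  shows "epow x \<theta> * epow y (1 - \<theta>) \<le> ennreal \<theta> * x + ennreal (1 - \<theta>) * y"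
proof (cases x rule: ennreal_pos_cases)
  case 2
  then show ?thesis
    using assms by (cases "y = 0") (auto simp: epow_zero ennreal_mult_top)
next
  case (3 r)
  then show ?thesis
  proof (cases y rule: ennreal_pos_cases)
    case (3 s)
    have "r powr \<theta> * s powr (1 - \<theta>) \<le> \<theta> * r + (1 - \<theta>) * s"
      using assms \<open>r > 0\<close> \<open>s > 0\<close> by (intro Youngs_inequality_0) auto
    then show ?thesis using assms \<open>x = ennreal r\<close> \<open>r > 0\<close> 3
      by (simp add: ennreal_mult[symmetric] ennreal_plus[symmetric] ennreal_leI del: ennreal_plus)
  qed (use assms in \<open>auto simp: epow_zero epow_top ennreal_mult_top\<close>)
qed (use assms in \<open>auto simp: epow_zero\<close>)

lemma nn_integral_holder_epow:
  fixes u v :: "'a \<Rightarrow> ennreal"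
  assumes u: "u \<in> borel_measurable M" and v: "v \<in> borel_measurable M"
    and \<theta>: "0 < \<theta>" "\<theta> < 1"
  shows "(\<integral>\<^sup>+x. epow (u x) \<theta> * epow (v x) (1 - \<theta>) \<partial>M)
     \<le> epow (\<integral>\<^sup>+x. u x \<partial>M) \<theta> * epow (\<integral>\<^sup>+x. v x \<partial>M) (1 - \<theta>)"
proof -
  define U where "U = (\<integral>\<^sup>+x. u x \<partial>M)"
  define V where "V = (\<integral>\<^sup>+x. v x \<partial>M)"
  consider "U = 0 \<or> V = 0" | "U \<noteq> 0" "V \<noteq> 0" "U = \<infinity> \<or> V = \<infinity>" | a b where "a > 0" "U = ennreal a" "b > 0" "V = ennreal b"
    by (metis ennreal_pos_cases)
  then show ?thesis
  proof cases
    case 1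
    then have "(AE x in M. u x = 0) \<or> (AE x in M. v x = 0)"
      using u v by (auto simp: U_def V_def nn_integral_0_iff_AE)
    then have "AE x in M. epow (u x) \<theta> * epow (v x) (1 - \<theta>) = 0"
      using \<theta> by (auto simp: epow_zero elim: AE_mp)
    then have "(\<integral>\<^sup>+x. epow (u x) \<theta> * epow (v x) (1 - \<theta>) \<partial>M) = 0"
      using u v by (subst nn_integral_0_iff_AE) auto
    then show ?thesis by simp
  next
    case 2
    have "epow U \<theta> \<noteq> 0" "epow V (1 - \<theta>) \<noteq> 0"
      using 2 \<theta> by (simp_all add: epow_eq_0_iff)
    moreover have "epow U \<theta> = \<infinity> \<or> epow V (1 - \<theta>) = \<infinity>"
      using 2 \<theta> by (auto simp: epow_top)
    ultimately have "epow U \<theta> * epow V (1 - \<theta>) = \<infinity>"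
      by (auto simp: ennreal_mult_eq_top_iff)
    then show ?thesis by (simp add: U_def V_def)
  next
    case 3
    let ?u = "\<lambda>x. ennreal (1 / a) * u x" and ?v = "\<lambda>x. ennreal (1 / b) * v x"
    define C where "C = a powr \<theta> * b powr (1 - \<theta>)"
    have "C * ((1 / a) powr \<theta> * (1 / b) powr (1 - \<theta>)) = 1"
      using 3 by (simp add: C_def powr_divide)
    then have "ennreal C * (epow (?u x) \<theta> * epow (?v x) (1 - \<theta>)) = epow (u x) \<theta> * epow (v x) (1 - \<theta>)"
      for x using 3
      by (simp add: epow_mult_ennreal C_def ennreal_mult'[symmetric] mult.assoc[symmetric] del: ennreal_mult')
         (simp add: mult.assoc mult.left_commute[of "ennreal _"] ennreal_mult'[symmetric] del: ennreal_mult')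
    then have "(\<integral>\<^sup>+x. epow (u x) \<theta> * epow (v x) (1 - \<theta>) \<partial>M)
        = ennreal C * (\<integral>\<^sup>+x. epow (?u x) \<theta> * epow (?v x) (1 - \<theta>) \<partial>M)"
      using u v by (simp add: nn_integral_cmult[symmetric])
    also have "\<dots> \<le> ennreal C * (\<integral>\<^sup>+x. ennreal \<theta> * ?u x + ennreal (1 - \<theta>) * ?v x \<partial>M)"
      using \<theta> by (intro mult_left_mono nn_integral_mono epow_young) auto
    also have "\<dots> = ennreal C"
      using 3 u v \<theta> by (simp add: nn_integral_add nn_integral_cmult U_def[symmetric] V_def[symmetric]
          ennreal_mult[symmetric] ennreal_plus[symmetric] del: ennreal_plus)
    finally show ?thesis
      using 3 by (simp add: C_def U_def[symmetric] V_def[symmetric] ennreal_mult)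
  qed
qed

section \<open>Extended logarithm\<close>

lemma elog_ennreal [simp]: "r > 0 \<Longrightarrow> elog (ennreal r) = ereal (ln r)"
  by (simp add: elog_def)

lemma elog_top [simp]: "elog top = \<infinity>"
  by (simp add: elog_def)

lemma elog_zero [simp]: "elog 0 = -\<infinity>"
  by (simp add: elog_def)

lemma elog_mono: "x \<le> y \<Longrightarrow> elog x \<le> elog y"
proof (cases x rule: ennreal_pos_cases)
  case (3 r)
  assume "x \<le> y"
  then show ?thesis using 3
    by (cases y rule: ennreal_pos_cases) auto
qed (auto simp: top_unique)

lemma ennreal_le_finite_posE:
  fixes x :: ennreal
  assumes "x \<noteq> 0" "x \<le> ennreal r"
  obtains s where "s > 0" "x = ennreal s" "s \<le> r"
proof -
  have "x \<noteq> \<infinity>" using assms(2) by (auto simp: top_unique)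
  with assms(1) obtain s where "s > 0" "x = ennreal s" by (rule ennreal_finite_posE)
  moreover have "r > 0"
    using assms by (metis ennreal_eq_0_iff le_zero_eq not_le)
  ultimately show ?thesis using assms(2) that by auto
qed

lemma elog_le_uadd_of_le_epow:
  fixes I K J :: ennreal
  assumes I: "I \<noteq> 0" and \<theta>: "0 < \<theta>" "\<theta> < 1"
    and le: "I \<le> epow K \<theta> * epow J (1 - \<theta>)"
  shows "elog I \<le> uadd (ereal \<theta> * elog K) (ereal (1 - \<theta>) * elog J)"
proof (cases "K = \<infinity> \<or> J = \<infinity>")
  case True
  then show ?thesis using \<theta> by (auto simp: uadd_def)
next
  case False
  have "K \<noteq> 0" "J \<noteq> 0"
    using I le \<theta> by (auto simp: epow_zero)
  with False obtain k j where kj: "k > 0" "K = ennreal k" "j > 0" "J = ennreal j"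
    by (metis ennreal_finite_posE)
  with le have "I \<le> ennreal (k powr \<theta> * j powr (1 - \<theta>))"
    by (simp add: ennreal_mult)
  with I obtain i where i: "i > 0" "I = ennreal i" "i \<le> k powr \<theta> * j powr (1 - \<theta>)"
    by (rule ennreal_le_finite_posE)
  then have "ln i \<le> ln (k powr \<theta> * j powr (1 - \<theta>))" using kj by simp
  also have "\<dots> = \<theta> * ln k + (1 - \<theta>) * ln j" using kj by (simp add: ln_mult ln_powr)
  finally show ?thesis using i kj by (simp add: uadd_def)
qed

lemma ladd_le_elog_of_le_epow:
  fixes K A J :: ennreal
  assumes A: "A \<noteq> 0" "A \<noteq> \<infinity>" and J: "J \<noteq> 0" and c: "0 < c" "c < 1"
    and le: "K \<le> epow A c * epow J (1 - c)"
  shows "ladd (ereal (1 / c) * elog K) (- (ereal ((1 - c) / c) * elog J)) \<le> elog A"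
proof (cases "J = \<infinity> \<or> K = 0")
  case True
  then show ?thesis using c by (auto simp: ladd_def)
next
  case False
  obtain a j where aj: "a > 0" "A = ennreal a" "j > 0" "J = ennreal j"
    using A J False by (metis ennreal_finite_posE)
  with le have "K \<le> ennreal (a powr c * j powr (1 - c))"
    by (simp add: ennreal_mult)
  with False obtain k where k: "k > 0" "K = ennreal k" "k \<le> a powr c * j powr (1 - c)"
    by (metis ennreal_le_finite_posE)
  then have "ln k \<le> ln (a powr c * j powr (1 - c))" using aj by simp
  also have "\<dots> = c * ln a + (1 - c) * ln j" using aj by (simp add: ln_mult ln_powr)
  finally have "ln k / c - (1 - c) / c * ln j \<le> ln a"
    using c by (simp add: field_simps)
  then show ?thesis using aj k by (simp add: ladd_def)
qed

lemma ladd_le_elog_of_le_epow_neg: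
  fixes K A J :: ennreal
  assumes A: "A \<noteq> 0" "A \<noteq> \<infinity>" and J: "J \<noteq> 0" and c: "c < 0"
    and le: "J \<le> epow K (1 / (1 - c)) * epow A (1 - 1 / (1 - c))"
  shows "ladd (ereal (1 / c) * elog K) (- (ereal ((1 - c) / c) * elog J)) \<le> elog A"
proof (cases "K = \<infinity>")
  case True
  then show ?thesis using c by (simp add: ladd_def)
next
  case False
  have "K \<noteq> 0"
    using J le c by (auto simp: epow_zero field_simps)
  with A False obtain a k where ak: "a > 0" "A = ennreal a" "k > 0" "K = ennreal k"
    by (metis ennreal_finite_posE)
  with le have "J \<le> ennreal (k powr (1 / (1 - c)) * a powr (1 - 1 / (1 - c)))"
    by (simp add: ennreal_mult)
  with J obtain j where j: "j > 0" "J = ennreal j" "j \<le> k powr (1 / (1 - c)) * a powr (1 - 1 / (1 - c))"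
    by (rule ennreal_le_finite_posE)
  then have "ln j \<le> ln (k powr (1 / (1 - c)) * a powr (1 - 1 / (1 - c)))" using ak by simp
  also have "\<dots> = (ln k - c * ln a) / (1 - c)"
    using ak c by (simp add: ln_mult ln_powr) (simp add: divide_simps)
  finally have "ln k / c - (1 - c) / c * ln j \<le> ln a"
    using c by (simp add: field_simps)
  then show ?thesis using ak j by (simp add: ladd_def)
qed

lemma le_of_le_epow_mult_self:
  fixes A T :: ennreal
  assumes A: "A \<noteq> 0" "A \<noteq> \<infinity>" and \<theta>: "0 < \<theta>" "\<theta> < 1"
    and le: "A \<le> epow T \<theta> * epow A (1 - \<theta>)"
  shows "A \<le> T"
proof (cases "T = \<infinity>")
  case False
  have "T \<noteq> 0"
    using A le \<theta> by (auto simp: epow_zero)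
  with A False obtain a t where at: "a > 0" "A = ennreal a" "t > 0" "T = ennreal t"
    by (metis ennreal_finite_posE)
  with le have "a powr \<theta> * a powr (1 - \<theta>) \<le> t powr \<theta> * a powr (1 - \<theta>)"
    by (simp add: ennreal_mult[symmetric] powr_add[symmetric] del: ennreal_mult)
  then have "a powr \<theta> \<le> t powr \<theta>" using at by simp
  then have "a \<le> t" using at \<theta> by (metis not_le powr_less_mono2 less_imp_le)
  then show ?thesis using at by simp
qed simp

lemma uadd_convex_comb_self:
  assumes "e \<noteq> -\<infinity>" "a > 0" "b > 0" "a + b = 1"
  shows "uadd (ereal a * e) (ereal b * e) = e"
proof (cases e)
  case (real r)
  then have "ereal a * e + ereal b * e = ereal ((a + b) * r)" by (simp add: algebra_simps)
  then show ?thesis using real assms by (simp add: uadd_def)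
qed (use assms in \<open>auto simp: uadd_def\<close>)

lemma ladd_convex_comb_self:
  assumes "\<bar>e\<bar> \<noteq> \<infinity>" "a \<noteq> 0"
  shows "ladd (ereal (1 / a) * e) (- (ereal ((1 - a) / a) * e)) = e"
proof -
  obtain r where "e = ereal r" using assms by auto
  moreover have "r / a - (1 - a) / a * r = r"
    using assms by (simp add: field_simps)
  ultimately show ?thesis by (simp add: ladd_def)
qed

section \<open>Renyi divergence through the Radon-Nikodym derivative\<close>

lemma renyi_ref_integral_eq_RN_deriv:
  assumes ref: "renyi_ref X Y N p q" and Y: "finite_measure Y"
    and ac: "absolutely_continuous Y X" and sets: "sets X = sets Y" and \<alpha>: "\<alpha> > 0"
  shows "(\<integral>\<^sup>+x \<in> {x \<in> space N. p x > 0}. epow (q x) \<alpha> * epow (p x) (1 - \<alpha>) \<partial>N)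
       = (\<integral>\<^sup>+x. epow (RN_deriv Y X x) \<alpha> \<partial>Y)"
proof -
  interpret N: sigma_finite_measure N using ref by (simp add: renyi_ref_def)
  interpret Y: finite_measure Y by fact
  have p: "p \<in> borel_measurable N" and q: "q \<in> borel_measurable N"
    and Y_eq: "Y = density N p" and X_eq: "X = density N q"
    using ref by (auto simp: renyi_ref_def)
  define f where "f = RN_deriv Y X"
  have f: "f \<in> borel_measurable N"
    using Y_eq by (simp add: f_def)
  have "density N q = density N (\<lambda>x. p x * f x)"
    using Y.density_RN_deriv[OF ac sets] density_density_eq[OF p f] X_eq Y_eq
    by (simp add: f_def)
  then have q_eq: "AE x in N. q x = p x * f x"
    using N.density_unique_iff[OF q] p f by auto
  have "(\<integral>\<^sup>+x. p x \<partial>N) \<noteq> \<infinity>"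
    using Y.emeasure_finite[of "space Y"] Y_eq p by (simp add: emeasure_density)
  then have p_fin: "AE x in N. p x \<noteq> \<infinity>"
    using nn_integral_PInf_AE[OF p] by simp
  have "(\<integral>\<^sup>+x \<in> {x \<in> space N. p x > 0}. epow (q x) \<alpha> * epow (p x) (1 - \<alpha>) \<partial>N)
      = (\<integral>\<^sup>+x. p x * epow (f x) \<alpha> \<partial>N)"
    using q_eq p_fin AE_space
    by (intro nn_integral_cong_AE, eventually_elim)
       (auto simp: indicator_def epow_mult_epow_one_minus[OF \<alpha>] zero_less_iff_neq_zero)
  also have "\<dots> = (\<integral>\<^sup>+x. epow (f x) \<alpha> \<partial>Y)"
    using Y_eq p f by (simp add: nn_integral_density)
  finally show ?thesis unfolding f_def .
qed

text \<open>renyi_core evaluates its formula at a reference triple picked by SOME;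
  by the previous lemma every admissible choice gives the same value.\<close>

lemma renyi_eq_RN_deriv:
  assumes Y: "finite_measure Y" and sets: "sets X = sets Y"
    and ac: "absolutely_continuous Y X" and \<alpha>: "\<alpha> > 0" "\<alpha> \<noteq> 1"
  shows "renyi \<alpha> X Y = ereal (1 / (\<alpha> * (\<alpha> - 1))) * elog (\<integral>\<^sup>+x. epow (RN_deriv Y X x) \<alpha> \<partial>Y)"
proof -
  interpret Y: finite_measure Y by fact
  let ?ref = "\<lambda>t. renyi_ref X Y (fst t) (fst (snd t)) (snd (snd t))"
  define t where "t = (SOME t. ?ref t)"
  have "?ref (Y, \<lambda>_. 1, RN_deriv Y X)"
    using Y.density_RN_deriv[OF ac sets] Y.sigma_finite_measure_axioms
    by (simp add: renyi_ref_def density_1)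
  then have "?ref t"
    unfolding t_def by (rule someI)
  then have "renyi_core \<alpha> X Y = ereal (1 / (\<alpha> * (\<alpha> - 1))) * elog (\<integral>\<^sup>+x. epow (RN_deriv Y X x) \<alpha> \<partial>Y)"
    unfolding renyi_core_def Let_def t_def[symmetric]
    by (subst renyi_ref_integral_eq_RN_deriv[OF _ Y.finite_measure_axioms ac sets \<alpha>(1)]) auto
  then show ?thesis
    using \<alpha> ac by (auto simp: renyi_def)
qed

section \<open>Moments of a density\<close>

text \<open>
  Part (1) of the theorem is the instance M = P, N = Q of the following locale;
  parts (2) and (3) are the instance M = Q, N = P.
\<close>

locale abs_cont_prob_pair = M: prob_space M + N: prob_space N
  for M N :: "'a measure" +
  assumes sets_N: "sets N = sets M"
    and abs_cont: "absolutely_continuous M N"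
begin

definition rn_moment :: "real \<Rightarrow> ennreal" where
  "rn_moment \<alpha> = (\<integral>\<^sup>+x. epow (RN_deriv M N x) \<alpha> \<partial>M)"

lemma measurable_N_iff: "f \<in> borel_measurable N \<longleftrightarrow> f \<in> borel_measurable M"
  using measurable_cong_sets[OF sets_N refl] by blast

lemma nn_integral_N:
  "f \<in> borel_measurable M \<Longrightarrow> (\<integral>\<^sup>+x. f x \<partial>N) = (\<integral>\<^sup>+x. RN_deriv M N x * f x \<partial>M)"
  by (rule M.RN_deriv_nn_integral[OF abs_cont sets_N])

lemma nn_integral_RN_deriv: "(\<integral>\<^sup>+x. RN_deriv M N x \<partial>M) = 1"
  using nn_integral_N[of "\<lambda>_. 1"] by (simp add: N.emeasure_space_1)

lemma AE_RN_deriv_finite: "AE x in M. RN_deriv M N x \<noteq> \<infinity>"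
  using M.RN_deriv_finite[OF N.sigma_finite_measure_axioms abs_cont sets_N] by simp

lemma rn_moment_nonzero: "\<alpha> > 0 \<Longrightarrow> rn_moment \<alpha> \<noteq> 0"
proof
  assume "\<alpha> > 0" "rn_moment \<alpha> = 0"
  then have "AE x in M. RN_deriv M N x = 0"
    by (auto simp: rn_moment_def nn_integral_0_iff_AE epow_eq_0_iff)
  then have "(\<integral>\<^sup>+x. RN_deriv M N x \<partial>M) = 0"
    by (simp add: nn_integral_cong_AE)
  then show False
    using nn_integral_RN_deriv by simp
qed

lemma RN_deriv_mult_epow:
  assumes "1 + \<beta> > 0"
  shows "AE x in M. RN_deriv M N x * epow (RN_deriv M N x) \<beta> = epow (RN_deriv M N x) (1 + \<beta>)"
  using AE_RN_deriv_finite
proof eventually_elim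
  case (elim x)
  then show ?case
    using assms by (cases "RN_deriv M N x = 0") (simp_all add: epow_zero epow_add)
qed

lemma nn_integral_N_epow_RN_deriv:
  "1 + \<beta> > 0 \<Longrightarrow> (\<integral>\<^sup>+x. epow (RN_deriv M N x) \<beta> \<partial>N) = rn_moment (1 + \<beta>)"
  unfolding rn_moment_def nn_integral_N[OF measurable_epow[OF borel_measurable_RN_deriv]]
  by (intro nn_integral_cong_AE RN_deriv_mult_epow)

lemma renyi_eq_rn_moment:
  "\<alpha> > 0 \<Longrightarrow> \<alpha> \<noteq> 1 \<Longrightarrow> renyi \<alpha> N M = ereal (1 / (\<alpha> * (\<alpha> - 1))) * elog (rn_moment \<alpha>)"
  unfolding rn_moment_def
  by (rule renyi_eq_RN_deriv[OF M.finite_measure_axioms sets_N abs_cont])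

lemma elog_rn_moment_eq_renyi:
  "\<alpha> > 0 \<Longrightarrow> \<alpha> \<noteq> 1 \<Longrightarrow> elog (rn_moment \<alpha>) = ereal (\<alpha> * (\<alpha> - 1)) * renyi \<alpha> N M"
  by (simp add: renyi_eq_rn_moment mult.assoc[symmetric])

lemma rn_moment_le_1:
  assumes "0 < \<alpha>" "\<alpha> < 1"
  shows "rn_moment \<alpha> \<le> 1"
proof -
  have "rn_moment \<alpha> = (\<integral>\<^sup>+x. epow (RN_deriv M N x) \<alpha> * epow 1 (1 - \<alpha>) \<partial>M)"
    by (simp add: rn_moment_def)
  also have "\<dots> \<le> epow (\<integral>\<^sup>+x. RN_deriv M N x \<partial>M) \<alpha> * epow (\<integral>\<^sup>+x. 1 \<partial>M) (1 - \<alpha>)"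
    using assms by (intro nn_integral_holder_epow) auto
  also have "\<dots> = 1"
    by (simp add: nn_integral_RN_deriv M.emeasure_space_1)
  finally show ?thesis .
qed

lemma nn_integral_N_le_rn_moment:
  assumes \<nu>: "\<nu> > 0" and \<tau>: "\<tau> \<in> borel_measurable M"
    and le: "(\<integral>\<^sup>+x. epow (\<tau> x) (1 + 1 / \<nu>) \<partial>M) \<le> rn_moment (1 + \<nu>)"
  shows "(\<integral>\<^sup>+x. \<tau> x \<partial>N) \<le> rn_moment (1 + \<nu>)"
proof -
  define \<theta> where "\<theta> = \<nu> / (1 + \<nu>)"
  have "1 + \<nu> > 0" using \<nu> by simp
  then have \<theta>: "0 < \<theta>" "\<theta> < 1" and conj: "(1 + 1 / \<nu>) * \<theta> = 1" "(1 + \<nu>) * (1 - \<theta>) = 1"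
    using \<nu> by (simp_all add: \<theta>_def divide_simps)
  have "(\<integral>\<^sup>+x. \<tau> x \<partial>N)
      = (\<integral>\<^sup>+x. epow (epow (\<tau> x) (1 + 1 / \<nu>)) \<theta> * epow (epow (RN_deriv M N x) (1 + \<nu>)) (1 - \<theta>) \<partial>M)"
    unfolding epow_epow conj using \<tau> by (simp add: nn_integral_N mult.commute)
  also have "\<dots> \<le> epow (\<integral>\<^sup>+x. epow (\<tau> x) (1 + 1 / \<nu>) \<partial>M) \<theta> * epow (rn_moment (1 + \<nu>)) (1 - \<theta>)"
    unfolding rn_moment_def using \<tau> \<theta> by (intro nn_integral_holder_epow) auto
  also have "\<dots> \<le> epow (rn_moment (1 + \<nu>)) \<theta> * epow (rn_moment (1 + \<nu>)) (1 - \<theta>)"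
    using le \<theta> by (intro mult_right_mono epow_mono) auto
  also have "\<dots> = rn_moment (1 + \<nu>)"
    using \<theta> by (simp add: epow_add_pos[symmetric])
  finally show ?thesis .
qed

lemma elog_rn_moment_le_uadd:
  assumes \<nu>: "\<nu> > 0" and c: "c > 1"
  shows "elog (rn_moment (1 + \<nu>))
    \<le> uadd (ereal (1 / c) * elog (rn_moment (\<nu> * c))) (ereal (1 - 1 / c) * elog (rn_moment (c / (c - 1))))"
proof -
  have e: "\<nu> * c * (1 / c) = \<nu>" "c / (c - 1) * (1 - 1 / c) = 1"
    using c by (auto simp: field_simps)
  have "rn_moment (1 + \<nu>)
      = (\<integral>\<^sup>+x. epow (epow (RN_deriv M N x) (\<nu> * c)) (1 / c)
            * epow (epow (RN_deriv M N x) (c / (c - 1))) (1 - 1 / c) \<partial>M)"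
    unfolding rn_moment_def epow_epow e using \<nu> by (simp add: epow_add_pos mult.commute)
  also have "\<dots> \<le> epow (rn_moment (\<nu> * c)) (1 / c) * epow (rn_moment (c / (c - 1))) (1 - 1 / c)"
    unfolding rn_moment_def using c by (intro nn_integral_holder_epow) auto
  finally show ?thesis
    using \<nu> c by (intro elog_le_uadd_of_le_epow rn_moment_nonzero) auto
qed

lemma INF_uadd_representation:
  assumes \<nu>: "\<nu> > 0"
  defines "F \<equiv> \<lambda>c. uadd (ereal (1 / c) * elog (\<integral>\<^sup>+x. epow (epow (RN_deriv M N x) \<nu>) c \<partial>M))
                      (ereal (1 / (c - 1)) * renyi (c / (c - 1)) N M)"
  shows "F (1 + 1 / \<nu>) = elog (rn_moment (1 + \<nu>))"
    and "(INF c \<in> {1<..}. F c) = elog (rn_moment (1 + \<nu>))"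
proof -
  have F_eq: "F c = uadd (ereal (1 / c) * elog (rn_moment (\<nu> * c)))
                         (ereal (1 - 1 / c) * elog (rn_moment (c / (c - 1))))" if c: "c > 1" for c
  proof -
    have "1 / (c - 1) * (1 / (c / (c - 1) * (c / (c - 1) - 1))) = 1 - 1 / c"
      using c by (simp add: field_simps)
    then show ?thesis
      using c by (simp add: F_def epow_epow rn_moment_def[symmetric] renyi_eq_rn_moment
          mult.assoc[symmetric])
  qed
  show opt: "F (1 + 1 / \<nu>) = elog (rn_moment (1 + \<nu>))"
  proof -
    define c where "c = 1 + 1 / \<nu>"
    have c: "c > 1" "\<nu> * c = 1 + \<nu>" "c / (c - 1) = 1 + \<nu>"
      using \<nu> by (simp_all add: c_def field_simps)
    have "elog (rn_moment (1 + \<nu>)) \<noteq> -\<infinity>"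
      using \<nu> rn_moment_nonzero[of "1 + \<nu>"] by (simp add: elog_def)
    with c show ?thesis
      by (simp add: F_eq uadd_convex_comb_self flip: c_def)
  qed
  show "(INF c \<in> {1<..}. F c) = elog (rn_moment (1 + \<nu>))"
  proof (rule cInf_eq_minimum)
    show "elog (rn_moment (1 + \<nu>)) \<in> F ` {1<..}"
      using \<nu> opt by (intro image_eqI[of _ _ "1 + 1 / \<nu>"]) auto
  qed (use \<nu> in \<open>auto simp: F_eq elog_rn_moment_le_uadd\<close>)
qed

theorem sup_Tplus_representation:
  assumes \<nu>: "\<nu> > 0"
  shows "let \<phi> = (\<lambda>x. epow (RN_deriv M N x) \<nu>);
           L = elog (\<integral>\<^sup>+x. \<phi> x \<partial>N);
           F = (\<lambda>c. uadd (ereal (1 / c) * elog (\<integral>\<^sup>+x. epow (\<phi> x) c \<partial>M))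
                          (ereal (1 / (c - 1)) * renyi (c / (c - 1)) N M))
       in (SUP \<tau> \<in> Tplus M (1 + 1 / \<nu>) \<phi>. elog (\<integral>\<^sup>+x. \<tau> x \<partial>N)) = L
        \<and> L = (INF c \<in> {1<..}. F c)
        \<and> F (1 + 1 / \<nu>) = (INF c \<in> {1<..}. F c)
        \<and> L = ereal (\<nu> * (1 + \<nu>)) * renyi (1 + \<nu>) N M"
proof -
  define \<phi> where "\<phi> = (\<lambda>x. epow (RN_deriv M N x) \<nu>)"
  have \<phi>_meas: "\<phi> \<in> borel_measurable M"
    by (simp add: \<phi>_def)
  have L_eq: "(\<integral>\<^sup>+x. \<phi> x \<partial>N) = rn_moment (1 + \<nu>)"
    using \<nu> by (simp add: \<phi>_def nn_integral_N_epow_RN_deriv add.commute)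
  have "(\<integral>\<^sup>+x. epow (\<phi> x) (1 + 1 / \<nu>) \<partial>M) = rn_moment (1 + \<nu>)"
    using \<nu> by (simp add: \<phi>_def epow_epow rn_moment_def distrib_left add.commute)
  then have "(SUP \<tau> \<in> Tplus M (1 + 1 / \<nu>) \<phi>. elog (\<integral>\<^sup>+x. \<tau> x \<partial>N)) = elog (rn_moment (1 + \<nu>))"
    using \<nu>
  proof (intro cSup_eq_maximum)
    show "elog (rn_moment (1 + \<nu>)) \<in> (\<lambda>\<tau>. elog (\<integral>\<^sup>+x. \<tau> x \<partial>N)) ` Tplus M (1 + 1 / \<nu>) \<phi>"
      by (rule image_eqI[of _ _ \<phi>]) (auto simp: Tplus_def \<phi>_meas L_eq)
  qed (auto simp: Tplus_def intro!: elog_mono nn_integral_N_le_rn_moment)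
  moreover have "elog (rn_moment (1 + \<nu>)) = ereal (\<nu> * (1 + \<nu>)) * renyi (1 + \<nu>) N M"
    using \<nu> elog_rn_moment_eq_renyi[of "1 + \<nu>"] by (simp add: mult.commute)
  ultimately show ?thesis
    using \<nu> INF_uadd_representation[of \<nu>] L_eq unfolding Let_def \<phi>_def by simp
qed

lemma nn_integral_N_epow_le_holder:
  assumes c: "0 < c" "c < 1"
  shows "(\<integral>\<^sup>+x. epow (RN_deriv M N x) (\<nu> * c) \<partial>N)
    \<le> epow (rn_moment \<nu>) c * epow (rn_moment (1 / (1 - c))) (1 - c)"
proof -
  have e: "1 / (1 - c) * (1 - c) = 1" using c by simp
  have "(\<integral>\<^sup>+x. epow (RN_deriv M N x) (\<nu> * c) \<partial>N)
      = (\<integral>\<^sup>+x. epow (epow (RN_deriv M N x) \<nu>) c * epow (epow (RN_deriv M N x) (1 / (1 - c))) (1 - c) \<partial>M)"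
    unfolding epow_epow e by (simp add: nn_integral_N mult.commute)
  also have "\<dots> \<le> epow (rn_moment \<nu>) c * epow (rn_moment (1 / (1 - c))) (1 - c)"
    unfolding rn_moment_def using c by (intro nn_integral_holder_epow) auto
  finally show ?thesis .
qed

lemma rn_moment_le_holder_neg:
  assumes c: "c < 0"
  shows "rn_moment (1 / (1 - c))
    \<le> epow (\<integral>\<^sup>+x. epow (RN_deriv M N x) (\<nu> * c) \<partial>N) (1 / (1 - c)) * epow (rn_moment \<nu>) (1 - 1 / (1 - c))"
proof -
  define \<alpha> where "\<alpha> = 1 / (1 - c)"
  have \<alpha>: "0 < \<alpha>" "\<alpha> < 1" and ex: "(1 + \<nu> * c) * \<alpha> + \<nu> * (1 - \<alpha>) = \<alpha>"
    using c by (simp_all add: \<alpha>_def field_simps)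
  have "rn_moment \<alpha> \<le> (\<integral>\<^sup>+x. epow (RN_deriv M N x * epow (RN_deriv M N x) (\<nu> * c)) \<alpha>
                            * epow (epow (RN_deriv M N x) \<nu>) (1 - \<alpha>) \<partial>M)"
    unfolding rn_moment_def
  proof (intro nn_integral_mono_AE, use AE_RN_deriv_finite in eventually_elim)
    case (elim x)
    show ?case
    proof (cases "RN_deriv M N x = 0")
      case False
      with elim show ?thesis
        using epow_add[of "RN_deriv M N x" 1 "\<nu> * c", symmetric] epow_add[of "RN_deriv M N x" "(1 + \<nu> * c) * \<alpha>" "\<nu> * (1 - \<alpha>)"]
        by (simp add: epow_epow ex)
    qed (use \<alpha> in \<open>simp add: epow_zero\<close>)
  qed
  also have "\<dots> \<le> epow (\<integral>\<^sup>+x. RN_deriv M N x * epow (RN_deriv M N x) (\<nu> * c) \<partial>M) \<alpha> * epow (rn_moment \<nu>) (1 - \<alpha>)"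
    unfolding rn_moment_def using \<alpha> by (intro nn_integral_holder_epow) auto
  finally show ?thesis
    by (simp add: \<alpha>_def nn_integral_N)
qed

lemma ladd_le_elog_rn_moment:
  assumes \<nu>: "\<nu> > 0" and fin: "rn_moment \<nu> \<noteq> \<infinity>" and c: "c < 1" "c \<noteq> 0"
  shows "ladd (ereal (1 / c) * elog (\<integral>\<^sup>+x. epow (RN_deriv M N x) (\<nu> * c) \<partial>N))
      (- (ereal ((1 - c) / c) * elog (rn_moment (1 / (1 - c))))) \<le> elog (rn_moment \<nu>)"
proof -
  have nonzero: "rn_moment \<nu> \<noteq> 0" "rn_moment (1 / (1 - c)) \<noteq> 0"
    using \<nu> c by (simp_all add: rn_moment_nonzero)
  show ?thesis
  proof (cases "c > 0")
    case True
    with c show ?thesis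
      by (intro ladd_le_elog_of_le_epow nn_integral_N_epow_le_holder nonzero fin)
  next
    case False
    with c show ?thesis
      by (intro ladd_le_elog_of_le_epow_neg rn_moment_le_holder_neg nonzero fin) auto
  qed
qed

lemma SUP_ladd_representation:
  assumes \<nu>: "\<nu> > 0" "\<nu> \<noteq> 1" and fin: "rn_moment \<nu> \<noteq> \<infinity>"
  defines "G \<equiv> \<lambda>c. ladd (ereal (1 / c) * elog (\<integral>\<^sup>+x. epow (epow (RN_deriv M N x) \<nu>) c \<partial>N))
                      (- (ereal (1 / (1 - c)) * renyi (1 / (1 - c)) N M))"
  shows "G (1 - 1 / \<nu>) = elog (rn_moment \<nu>)"
    and "(SUP c \<in> {c. c < 1 \<and> c \<noteq> 0}. G c) = elog (rn_moment \<nu>)"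
proof -
  have G_eq: "G c = ladd (ereal (1 / c) * elog (\<integral>\<^sup>+x. epow (RN_deriv M N x) (\<nu> * c) \<partial>N))
      (- (ereal ((1 - c) / c) * elog (rn_moment (1 / (1 - c)))))" if c: "c < 1" "c \<noteq> 0" for c
  proof -
    have "1 / (1 - c) * (1 / (1 / (1 - c) * (1 / (1 - c) - 1))) = (1 - c) / c"
      using c by (simp add: field_simps)
    then show ?thesis
      using c by (simp add: G_def epow_epow renyi_eq_rn_moment mult.assoc[symmetric])
  qed
  show opt: "G (1 - 1 / \<nu>) = elog (rn_moment \<nu>)"
  proof -
    define c where "c = 1 - 1 / \<nu>"
    have c: "c < 1" "c \<noteq> 0" "\<nu> * c = \<nu> - 1" "1 / (1 - c) = \<nu>"
      using \<nu> by (simp_all add: c_def field_simps)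
    have "\<bar>elog (rn_moment \<nu>)\<bar> \<noteq> \<infinity>"
      using fin rn_moment_nonzero[OF \<nu>(1)] by (simp add: elog_def)
    then show ?thesis
      using c \<nu> by (simp add: G_eq nn_integral_N_epow_RN_deriv ladd_convex_comb_self flip: c_def)
  qed
  show "(SUP c \<in> {c. c < 1 \<and> c \<noteq> 0}. G c) = elog (rn_moment \<nu>)"
  proof (rule cSup_eq_maximum)
    show "elog (rn_moment \<nu>) \<in> G ` {c. c < 1 \<and> c \<noteq> 0}"
      using \<nu> opt by (intro image_eqI[of _ _ "1 - 1 / \<nu>"]) auto
  qed (use \<nu> fin in \<open>auto simp: G_eq ladd_le_elog_rn_moment\<close>)
qed

lemma rn_moment_le_of_Tminus:
  assumes \<nu>: "\<nu> > 1" and fin: "rn_moment \<nu> \<noteq> \<infinity>" and \<tau>: "\<tau> \<in> borel_measurable M"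
    and ge: "rn_moment \<nu> \<le> (\<integral>\<^sup>+x. epow (\<tau> x) (1 - 1 / \<nu>) \<partial>N)"
  shows "rn_moment \<nu> \<le> (\<integral>\<^sup>+x. \<tau> x \<partial>M)"
proof -
  define \<beta> where "\<beta> = 1 - 1 / \<nu>"
  have \<beta>: "0 < \<beta>" "\<beta> < 1" and e: "\<nu> * (1 - \<beta>) = 1"
    using \<nu> by (simp_all add: \<beta>_def)
  have "(\<integral>\<^sup>+x. epow (\<tau> x) \<beta> \<partial>N)
      = (\<integral>\<^sup>+x. epow (\<tau> x) \<beta> * epow (epow (RN_deriv M N x) \<nu>) (1 - \<beta>) \<partial>M)"
    unfolding epow_epow e using \<tau> by (simp add: nn_integral_N mult.commute)
  then have "rn_moment \<nu> \<le> (\<integral>\<^sup>+x. epow (\<tau> x) \<beta> * epow (epow (RN_deriv M N x) \<nu>) (1 - \<beta>) \<partial>M)"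
    using ge unfolding \<beta>_def by simp
  also have "\<dots> \<le> epow (\<integral>\<^sup>+x. \<tau> x \<partial>M) \<beta> * epow (rn_moment \<nu>) (1 - \<beta>)"
    unfolding rn_moment_def using \<tau> \<beta> by (intro nn_integral_holder_epow) auto
  finally have "rn_moment \<nu> \<le> epow (\<integral>\<^sup>+x. \<tau> x \<partial>M) \<beta> * epow (rn_moment \<nu>) (1 - \<beta>)" .
  moreover have "rn_moment \<nu> \<noteq> 0"
    using \<nu> by (simp add: rn_moment_nonzero)
  ultimately show ?thesis
    using le_of_le_epow_mult_self fin \<beta> by blast
qed

text \<open>Here \<beta> = 1 - 1/\<nu> < 0. The factorisation h^\<nu> = \<tau>^(1-\<nu>) (h \<tau>^\<beta>)^\<nu> fails only
  where a product 0 * \<infinity> occurs, which the finiteness of \<integral> \<tau> dM and of \<integral> h \<tau>^\<beta> dM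
  excludes almost everywhere.\<close>

lemma rn_moment_le_of_Tplus:
  assumes \<nu>: "0 < \<nu>" "\<nu> < 1" and \<tau>: "\<tau> \<in> borel_measurable M"
    and le: "(\<integral>\<^sup>+x. epow (\<tau> x) (1 - 1 / \<nu>) \<partial>N) \<le> rn_moment \<nu>"
  shows "rn_moment \<nu> \<le> (\<integral>\<^sup>+x. \<tau> x \<partial>M)"
proof (cases "(\<integral>\<^sup>+x. \<tau> x \<partial>M) = \<infinity>")
  case False
  define \<beta> where "\<beta> = 1 - 1 / \<nu>"
  have \<beta>: "\<beta> < 0" "\<beta> * \<nu> = \<nu> - 1"
    using \<nu> by (simp_all add: \<beta>_def field_simps)
  let ?g = "\<lambda>x. RN_deriv M N x * epow (\<tau> x) \<beta>"
  have fin: "rn_moment \<nu> \<noteq> \<infinity>"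
    using rn_moment_le_1[OF \<nu>] by (auto simp: top_unique)
  have g_int: "(\<integral>\<^sup>+x. ?g x \<partial>M) \<le> rn_moment \<nu>"
    using le \<tau> by (simp add: \<beta>_def nn_integral_N)
  with fin have "AE x in M. ?g x \<noteq> \<infinity>"
    using \<tau> by (intro nn_integral_PInf_AE) (auto simp: top_unique)
  moreover have "AE x in M. \<tau> x \<noteq> \<infinity>"
    using False \<tau> by (intro nn_integral_PInf_AE) auto
  ultimately have "rn_moment \<nu> \<le> (\<integral>\<^sup>+x. epow (\<tau> x) (1 - \<nu>) * epow (?g x) (1 - (1 - \<nu>)) \<partial>M)"
    unfolding rn_moment_def using AE_RN_deriv_finite
    by (intro nn_integral_mono_AE, eventually_elim) (simp add: epow_le_epow_mult_epow_neg \<beta> \<nu>)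
  also have "\<dots> \<le> epow (\<integral>\<^sup>+x. \<tau> x \<partial>M) (1 - \<nu>) * epow (\<integral>\<^sup>+x. ?g x \<partial>M) (1 - (1 - \<nu>))"
    using \<tau> \<nu> by (intro nn_integral_holder_epow) auto
  also have "\<dots> \<le> epow (\<integral>\<^sup>+x. \<tau> x \<partial>M) (1 - \<nu>) * epow (rn_moment \<nu>) (1 - (1 - \<nu>))"
    using g_int \<nu> by (intro mult_left_mono epow_mono) auto
  finally have "rn_moment \<nu> \<le> epow (\<integral>\<^sup>+x. \<tau> x \<partial>M) (1 - \<nu>) * epow (rn_moment \<nu>) (1 - (1 - \<nu>))" .
  moreover have "rn_moment \<nu> \<noteq> 0"
    using \<nu> by (simp add: rn_moment_nonzero)
  ultimately show ?thesis
    using le_of_le_epow_mult_self[of "rn_moment \<nu>" "1 - \<nu>"] fin \<nu> by auto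
qed simp

theorem inf_Tminus_representation:
  assumes \<nu>: "\<nu> > 1" and fin: "(\<integral>\<^sup>+x. epow (RN_deriv M N x) (\<nu> - 1) \<partial>N) < \<infinity>"
  shows "let \<rho> = (\<lambda>x. epow (RN_deriv M N x) \<nu>);
           L = elog (\<integral>\<^sup>+x. \<rho> x \<partial>M);
           G = (\<lambda>c. ladd (ereal (1 / c) * elog (\<integral>\<^sup>+x. epow (\<rho> x) c \<partial>N))
                          (- (ereal (1 / (1 - c)) * renyi (1 / (1 - c)) N M)))
       in (INF \<tau> \<in> Tminus N (1 - 1 / \<nu>) \<rho>. elog (\<integral>\<^sup>+x. \<tau> x \<partial>M)) = L
        \<and> L = (SUP c \<in> {c. c < 1 \<and> c \<noteq> 0}. G c)
        \<and> G (1 - 1 / \<nu>) = (SUP c \<in> {c. c < 1 \<and> c \<noteq> 0}. G c)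
        \<and> L = ereal (\<nu> * (\<nu> - 1)) * renyi \<nu> N M"
proof -
  define \<rho> where "\<rho> = (\<lambda>x. epow (RN_deriv M N x) \<nu>)"
  have moment_fin: "rn_moment \<nu> \<noteq> \<infinity>"
    using fin \<nu> nn_integral_N_epow_RN_deriv[of "\<nu> - 1"] by simp
  have "(\<integral>\<^sup>+x. epow (\<rho> x) (1 - 1 / \<nu>) \<partial>N) = rn_moment \<nu>"
    using \<nu> nn_integral_N_epow_RN_deriv[of "\<nu> - 1"] by (simp add: \<rho>_def epow_epow right_diff_distrib)
  then have "(INF \<tau> \<in> Tminus N (1 - 1 / \<nu>) \<rho>. elog (\<integral>\<^sup>+x. \<tau> x \<partial>M)) = elog (rn_moment \<nu>)"
    using \<nu> moment_fin
  proof (intro cInf_eq_minimum)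
    show "elog (rn_moment \<nu>) \<in> (\<lambda>\<tau>. elog (\<integral>\<^sup>+x. \<tau> x \<partial>M)) ` Tminus N (1 - 1 / \<nu>) \<rho>"
      by (rule image_eqI[of _ _ \<rho>]) (auto simp: Tminus_def \<rho>_def rn_moment_def measurable_N_iff)
  qed (auto simp: Tminus_def measurable_N_iff intro!: elog_mono rn_moment_le_of_Tminus)
  then show ?thesis
    using \<nu> SUP_ladd_representation[of \<nu>] moment_fin elog_rn_moment_eq_renyi[of \<nu>]
    unfolding Let_def \<rho>_def rn_moment_def by simp
qed

theorem inf_Tplus_representation:
  assumes \<nu>: "0 < \<nu>" "\<nu> < 1"
  shows "let \<rho> = (\<lambda>x. epow (RN_deriv M N x) \<nu>);
           L = elog (\<integral>\<^sup>+x. \<rho> x \<partial>M);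
           G = (\<lambda>c. ladd (ereal (1 / c) * elog (\<integral>\<^sup>+x. epow (\<rho> x) c \<partial>N))
                          (- (ereal (1 / (1 - c)) * renyi (1 / (1 - c)) N M)))
       in (INF \<tau> \<in> Tplus N (1 - 1 / \<nu>) \<rho>. elog (\<integral>\<^sup>+x. \<tau> x \<partial>M)) = L
        \<and> L = (SUP c \<in> {c. c < 1 \<and> c \<noteq> 0}. G c)
        \<and> G (1 - 1 / \<nu>) = (SUP c \<in> {c. c < 1 \<and> c \<noteq> 0}. G c)
        \<and> L = ereal (\<nu> * (\<nu> - 1)) * renyi \<nu> N M"
proof -
  define \<rho> where "\<rho> = (\<lambda>x. epow (RN_deriv M N x) \<nu>)"
  have moment_fin: "rn_moment \<nu> \<noteq> \<infinity>"
    using rn_moment_le_1[OF \<nu>] by (auto simp: top_unique)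
  have "(\<integral>\<^sup>+x. epow (\<rho> x) (1 - 1 / \<nu>) \<partial>N) = rn_moment \<nu>"
    using \<nu> nn_integral_N_epow_RN_deriv[of "\<nu> - 1"] by (simp add: \<rho>_def epow_epow right_diff_distrib)
  then have "(INF \<tau> \<in> Tplus N (1 - 1 / \<nu>) \<rho>. elog (\<integral>\<^sup>+x. \<tau> x \<partial>M)) = elog (rn_moment \<nu>)"
    using \<nu>
  proof (intro cInf_eq_minimum)
    show "elog (rn_moment \<nu>) \<in> (\<lambda>\<tau>. elog (\<integral>\<^sup>+x. \<tau> x \<partial>M)) ` Tplus N (1 - 1 / \<nu>) \<rho>"
      by (rule image_eqI[of _ _ \<rho>]) (auto simp: Tplus_def \<rho>_def rn_moment_def measurable_N_iff)
  qed (auto simp: Tplus_def measurable_N_iff intro!: elog_mono rn_moment_le_of_Tplus)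
  then show ?thesis
    using \<nu> SUP_ladd_representation[of \<nu>] moment_fin elog_rn_moment_eq_renyi[of \<nu>]
    unfolding Let_def \<rho>_def rn_moment_def by simp
qed

end

lemma abs_cont_prob_pairI:
  "prob_space M \<Longrightarrow> prob_space N \<Longrightarrow> sets N = sets M \<Longrightarrow> absolutely_continuous M N
    \<Longrightarrow> abs_cont_prob_pair M N"
  by (simp add: abs_cont_prob_pair_def abs_cont_prob_pair_axioms_def)

theorem mainTheorem14:
  fixes P Q :: "'a measure"
  assumes "prob_space P" and "prob_space Q" and "sets Q = sets P"
  shows
   "(\<forall>\<nu>::real. absolutely_continuous P Q \<and> \<nu> > 0 \<longrightarrow>
      (let \<phi> = (\<lambda>x. epow (RN_deriv P Q x) \<nu>);
           L = elog (\<integral>\<^sup>+x. \<phi> x \<partial>Q);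
           F = (\<lambda>c. uadd (ereal (1 / c) * elog (\<integral>\<^sup>+x. epow (\<phi> x) c \<partial>P))
                          (ereal (1 / (c - 1)) * renyi (c / (c - 1)) Q P))
       in (SUP \<tau> \<in> Tplus P (1 + 1 / \<nu>) \<phi>. elog (\<integral>\<^sup>+x. \<tau> x \<partial>Q)) = L
        \<and> L = (INF c \<in> {1<..}. F c)
        \<and> F (1 + 1 / \<nu>) = (INF c \<in> {1<..}. F c)
        \<and> L = ereal (\<nu> * (1 + \<nu>)) * renyi (1 + \<nu>) Q P))
  \<and> (\<forall>\<nu>::real. absolutely_continuous Q P \<and> \<nu> > 1
        \<and> (\<integral>\<^sup>+x. epow (RN_deriv Q P x) (\<nu> - 1) \<partial>P) < \<infinity> \<longrightarrow>
      (let \<rho> = (\<lambda>x. epow (RN_deriv Q P x) \<nu>);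
           L = elog (\<integral>\<^sup>+x. \<rho> x \<partial>Q);
           G = (\<lambda>c. ladd (ereal (1 / c) * elog (\<integral>\<^sup>+x. epow (\<rho> x) c \<partial>P))
                          (- (ereal (1 / (1 - c)) * renyi (1 / (1 - c)) P Q)))
       in (INF \<tau> \<in> Tminus P (1 - 1 / \<nu>) \<rho>. elog (\<integral>\<^sup>+x. \<tau> x \<partial>Q)) = L
        \<and> L = (SUP c \<in> {c. c < 1 \<and> c \<noteq> 0}. G c)
        \<and> G (1 - 1 / \<nu>) = (SUP c \<in> {c. c < 1 \<and> c \<noteq> 0}. G c)
        \<and> L = ereal (\<nu> * (\<nu> - 1)) * renyi \<nu> P Q))
  \<and> (\<forall>\<nu>::real. absolutely_continuous Q P \<and> 0 < \<nu> \<and> \<nu> < 1 \<longrightarrow>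
      (let \<rho> = (\<lambda>x. epow (RN_deriv Q P x) \<nu>);
           L = elog (\<integral>\<^sup>+x. \<rho> x \<partial>Q);
           G = (\<lambda>c. ladd (ereal (1 / c) * elog (\<integral>\<^sup>+x. epow (\<rho> x) c \<partial>P))
                          (- (ereal (1 / (1 - c)) * renyi (1 / (1 - c)) P Q)))
       in (INF \<tau> \<in> Tplus P (1 - 1 / \<nu>) \<rho>. elog (\<integral>\<^sup>+x. \<tau> x \<partial>Q)) = L
        \<and> L = (SUP c \<in> {c. c < 1 \<and> c \<noteq> 0}. G c)
        \<and> G (1 - 1 / \<nu>) = (SUP c \<in> {c. c < 1 \<and> c \<noteq> 0}. G c)
        \<and> L = ereal (\<nu> * (\<nu> - 1)) * renyi \<nu> P Q))"
proof -
  have PQ: "abs_cont_prob_pair P Q" if "absolutely_continuous P Q"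
    using assms that by (intro abs_cont_prob_pairI)
  have QP: "abs_cont_prob_pair Q P" if "absolutely_continuous Q P"
    using assms that by (intro abs_cont_prob_pairI) auto
  show ?thesis
    using abs_cont_prob_pair.sup_Tplus_representation[OF PQ]
      abs_cont_prob_pair.inf_Tminus_representation[OF QP]
      abs_cont_prob_pair.inf_Tplus_representation[OF QP]
    by blast
qed

end
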